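(* For every integer $n\ge 0$, $$\Phi^{(3)}[a, a'; bq^n, b'; c; x, y] = \sum_{k=0}^n \begin{bmatrix} n \\ k \end{bmatrix} q^{2\binom{k}{2}} \frac{(bx)^k (a; q)_k}{(c; q)_k} \Phi^{(3)}[aq^k, a'; bq^k, b'; cq^k; x, y]$$ and $$\Phi^{(3)}[a, a'; bq^{-n}, b'; c; x, y] = \sum_{k=0}^n \begin{bmatrix} n \\ k \end{bmatrix} q^{\binom{k}{2} - nk} \frac{(-bx)^k (a; q)_k}{(c; q)_k} \Phi^{(3)}[aq^k, a'; b, b'; cq^k; x, y].$$
   Context: Let $q$ be a complex number with $0<|q|<1$. For complex $z$ and integer $m\ge 0$, $(z;q)_m=\prod_{j=0}^{m-1}(1-zq^j)$, with $(z;q)_0=1$. For integers $0\le k\le n$, $\begin{bmatrix} n \\ k \end{bmatrix}=\frac{(q;q)_n}{(q;q)_k(q;q)_{n-k}}$ is the $q$-binomial coefficient. The $q$-Appell function $\Phi^{(3)}$ is $$\Phi^{(3)}[a, a'; b, b'; c; x, y] = \sum_{m, n \geq 0} \frac{(a; q)_m (a'; q)_n (b; q)_m (b'; q)_n}{(q; q)_m (q; q)_n (c; q)_{m+n}} x^m y^n.$$ Identities are understood as identities of power series in $x,y$ (formal, or convergent for small $|x|,|y|$), with complex parameters chosen so that no denominator occurring vanishes. *)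

theory Defs
  imports "HOL-Analysis.Analysis"
begin

definition qpoch :: "complex \<Rightarrow> complex \<Rightarrow> nat \<Rightarrow> complex" where
  "qpoch z q m = (\<Prod>j<m. 1 - z * q ^ j)"

definition qbinom :: "complex \<Rightarrow> nat \<Rightarrow> nat \<Rightarrow> complex" where
  "qbinom q n k = qpoch q q n / (qpoch q q k * qpoch q q (n - k))"

definition qAppell3 ::
  "complex \<Rightarrow> complex \<Rightarrow> complex \<Rightarrow> complex \<Rightarrow> complex \<Rightarrow> complex \<Rightarrow> complex \<Rightarrow> complex \<Rightarrow> complex" where
  "qAppell3 q a a' b b' c x y =
     (\<Sum>\<^sub>\<infinity>(m, n)\<in>UNIV.
        qpoch a q m * qpoch a' q n * qpoch b q m * qpoch b' q n
        / (qpoch q q m * qpoch q q n * qpoch c q (m + n)) * x ^ m * y ^ n)"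

end

theory Submission
  imports Defs
begin

(* Replacing b by bq changes only the factor (b;q)_m of the (m,n)-th term, and
   (bq;q)_m - (b;q)_m = b (1 - q^m) (bq;q)_(m-1).  Summing over (m,n) gives the contiguous relation
     Phi[a,a';bq,b';c] = Phi[a,a';b,b';c] + bx(1-a)/(1-c) Phi[aq,a';bq,b';cq].
   Both expansions then follow by induction on n: expand Phi[..; b q^(n+1); ..] (resp. b q^(-n-1))
   by the induction hypothesis for bq (resp. b/q), apply the contiguous relation to every summand,
   and merge the two resulting sums with one of the two forms of the q-Pascal rule.
   The double series converge absolutely because (z;q)_k and 1/(z;q)_k grow more slowly
   than rho^k for every rho > 1. *)

lemma qpoch_0 [simp]: "qpoch z q 0 = 1"
  by (simp add: qpoch_def)

lemma qpoch_Suc: "qpoch z q (Suc m) = qpoch z q m * (1 - z * q ^ m)"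
  by (simp add: qpoch_def)

lemma qpoch_Suc_shift: "qpoch z q (Suc m) = (1 - z) * qpoch (z * q) q m"
  unfolding qpoch_def by (subst prod.lessThan_Suc_shift) (simp add: mult_ac)

lemma qpoch_Suc_diff:
  "qpoch (z * q) q (Suc m) = qpoch z q (Suc m) + z * (1 - q ^ Suc m) * qpoch (z * q) q m"
  unfolding qpoch_Suc[of "z * q"] qpoch_Suc_shift[of z] by (simp add: algebra_simps)

lemma qpoch_eq_0_iff: "qpoch z q m = 0 \<longleftrightarrow> (\<exists>j<m. z * q ^ j = 1)"
  by (auto simp: qpoch_def)

lemma qpoch_q_q_nonzero:
  assumes "\<And>j. q ^ Suc j \<noteq> 1"
  shows "qpoch q q m \<noteq> 0"
  using assms by (simp add: qpoch_eq_0_iff)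

lemma power_Suc_neq_1:
  fixes q :: "'a::real_normed_div_algebra"
  assumes "norm q < 1"
  shows "q ^ Suc j \<noteq> 1"
proof -
  have "norm (q ^ Suc j) < 1"
    using assms power_less_one_iff[of "norm q" "Suc j"] by (simp only: norm_power) simp
  then show ?thesis
    by (metis norm_one order_less_irrefl)
qed

lemma qbinom_0:
  assumes "\<And>j. q ^ Suc j \<noteq> 1"
  shows "qbinom q n 0 = 1"
  using qpoch_q_q_nonzero[OF assms] by (simp add: qbinom_def)

lemma qbinom_self:
  assumes "\<And>j. q ^ Suc j \<noteq> 1"
  shows "qbinom q n n = 1"
  using qpoch_q_q_nonzero[OF assms] by (simp add: qbinom_def)

lemma qbinom_Suc_Suc:
  assumes q: "\<And>j. q ^ Suc j \<noteq> 1" and "k < n"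
  shows "qbinom q (Suc n) (Suc k) = q ^ Suc k * qbinom q n (Suc k) + qbinom q n k"
    and "qbinom q (Suc n) (Suc k) = qbinom q n (Suc k) + q ^ (n - k) * qbinom q n k"
proof -
  obtain d where n: "n = Suc (k + d)"
    using \<open>k < n\<close> less_imp_Suc_add by blast
  define u v where "u = q ^ Suc k" and "v = q ^ Suc d"
  have Q: "qpoch q q (Suc j) = qpoch q q j * (1 - q ^ Suc j)" for j
    by (simp add: qpoch_Suc)
  have uv: "q ^ Suc n = u * v"
    by (simp add: n u_def v_def power_add)
  have diffs: "Suc n - Suc k = Suc d" "n - Suc k = d" "n - k = Suc d"
    using n by simp_all
  have "1 - u \<noteq> 0" "1 - v \<noteq> 0"
    using q unfolding u_def v_def by (metis right_minus_eq)+
  \<comment> \<open>All three q-binomials are multiples of R, and both rules reduce to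
    1 - u v = u (1 - v) + (1 - u) = (1 - v) + v (1 - u).\<close>
  define R where "R = qpoch q q n / (qpoch q q k * (1 - u) * qpoch q q d * (1 - v))"
  have binoms: "qbinom q (Suc n) (Suc k) = R * (1 - u * v)"
    "qbinom q n (Suc k) = R * (1 - v)" "qbinom q n k = R * (1 - u)"
    by (simp_all only: qbinom_def diffs Q uv u_def[symmetric] v_def[symmetric])
      (use \<open>1 - u \<noteq> 0\<close> \<open>1 - v \<noteq> 0\<close> in \<open>simp_all add: R_def mult.assoc[symmetric]\<close>)
  show "qbinom q (Suc n) (Suc k) = q ^ Suc k * qbinom q n (Suc k) + qbinom q n k"
    unfolding binoms u_def[symmetric] by algebra
  show "qbinom q (Suc n) (Suc k) = qbinom q n (Suc k) + q ^ (n - k) * qbinom q n k"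
    unfolding binoms diffs v_def[symmetric] by algebra
qed

lemma sum_qbinom_Suc_q_pow:
  assumes q: "\<And>j. q ^ Suc j \<noteq> 1"
  shows "(\<Sum>k\<le>Suc n. qbinom q (Suc n) k * V k)
       = (\<Sum>k\<le>n. qbinom q n k * q ^ k * V k) + (\<Sum>k\<le>n. qbinom q n k * V (Suc k))"
proof -
  have "(\<Sum>k\<le>Suc n. qbinom q (Suc n) k * V k)
      = V 0 + (\<Sum>k<n. qbinom q (Suc n) (Suc k) * V (Suc k)) + V (Suc n)"
    unfolding sum.atMost_shift sum.lessThan_Suc by (simp add: qbinom_0[OF q] qbinom_self[OF q])
  also have "(\<Sum>k<n. qbinom q (Suc n) (Suc k) * V (Suc k))
      = (\<Sum>k<n. qbinom q n (Suc k) * q ^ Suc k * V (Suc k)) + (\<Sum>k<n. qbinom q n k * V (Suc k))"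
    by (simp add: qbinom_Suc_Suc(1)[OF q] algebra_simps sum.distrib)
  also have "V 0 + \<dots> + V (Suc n)
      = (\<Sum>k\<le>n. qbinom q n k * q ^ k * V k) + (\<Sum>k\<le>n. qbinom q n k * V (Suc k))"
    unfolding sum.atMost_shift[of "\<lambda>k. qbinom q n k * q ^ k * V k"]
      sum.lessThan_Suc[of "\<lambda>k. qbinom q n k * V (Suc k)" n, unfolded lessThan_Suc_atMost]
    by (simp add: qbinom_0[OF q] qbinom_self[OF q])
  finally show ?thesis .
qed

lemma sum_qbinom_Suc_q_pow_diff:
  assumes q: "\<And>j. q ^ Suc j \<noteq> 1"
  shows "(\<Sum>k\<le>Suc n. qbinom q (Suc n) k * V k)
       = (\<Sum>k\<le>n. qbinom q n k * V k) + (\<Sum>k\<le>n. qbinom q n k * q ^ (n - k) * V (Suc k))"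
proof -
  have "(\<Sum>k\<le>Suc n. qbinom q (Suc n) k * V k)
      = V 0 + (\<Sum>k<n. qbinom q (Suc n) (Suc k) * V (Suc k)) + V (Suc n)"
    unfolding sum.atMost_shift sum.lessThan_Suc by (simp add: qbinom_0[OF q] qbinom_self[OF q])
  also have "(\<Sum>k<n. qbinom q (Suc n) (Suc k) * V (Suc k))
      = (\<Sum>k<n. qbinom q n (Suc k) * V (Suc k)) + (\<Sum>k<n. qbinom q n k * q ^ (n - k) * V (Suc k))"
    by (simp add: qbinom_Suc_Suc(2)[OF q] algebra_simps sum.distrib)
  also have "V 0 + \<dots> + V (Suc n)
      = (\<Sum>k\<le>n. qbinom q n k * V k) + (\<Sum>k\<le>n. qbinom q n k * q ^ (n - k) * V (Suc k))"
    unfolding sum.atMost_shift[of "\<lambda>k. qbinom q n k * V k"]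
      sum.lessThan_Suc[of "\<lambda>k. qbinom q n k * q ^ (n - k) * V (Suc k)" n, unfolded lessThan_Suc_atMost]
    by (simp add: qbinom_0[OF q] qbinom_self[OF q])
  finally show ?thesis .
qed

lemma sum_qbinom_merge_plus:
  assumes q: "\<And>j. q ^ Suc j \<noteq> 1" and W: "\<And>k. q ^ k * W k * D k = W (Suc k)"
  shows "(\<Sum>k\<le>n. qbinom q n k * (q ^ k * W k) * (T k + D k * T (Suc k)))
       = (\<Sum>k\<le>Suc n. qbinom q (Suc n) k * (W k * T k))"
proof -
  have "(\<Sum>k\<le>n. qbinom q n k * (q ^ k * W k) * (T k + D k * T (Suc k)))
      = (\<Sum>k\<le>n. qbinom q n k * q ^ k * (W k * T k)) + (\<Sum>k\<le>n. qbinom q n k * (W (Suc k) * T (Suc k)))"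
    by (simp add: sum.distrib[symmetric] W[symmetric] algebra_simps)
  also have "\<dots> = (\<Sum>k\<le>Suc n. qbinom q (Suc n) k * (W k * T k))"
    by (rule sum_qbinom_Suc_q_pow[OF q, symmetric])
  finally show ?thesis .
qed

lemma sum_qbinom_merge_minus:
  assumes q: "\<And>j. q ^ Suc j \<noteq> 1" and U: "\<And>k. k \<le> n \<Longrightarrow> U k * D k = - (q ^ (n - k) * U (Suc k))"
  shows "(\<Sum>k\<le>n. qbinom q n k * U k * (T k - D k * T (Suc k)))
       = (\<Sum>k\<le>Suc n. qbinom q (Suc n) k * (U k * T k))"
proof -
  have "qbinom q n k * U k * (T k - D k * T (Suc k))
      = qbinom q n k * (U k * T k) + qbinom q n k * q ^ (n - k) * (U (Suc k) * T (Suc k))" if "k \<le> n" for k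
  proof -
    have "qbinom q n k * U k * (T k - D k * T (Suc k))
        = qbinom q n k * (U k * T k) - qbinom q n k * (U k * D k) * T (Suc k)"
      by (simp add: algebra_simps)
    then show ?thesis
      by (simp add: U[OF that])
  qed
  then have "(\<Sum>k\<le>n. qbinom q n k * U k * (T k - D k * T (Suc k)))
      = (\<Sum>k\<le>n. qbinom q n k * (U k * T k)) + (\<Sum>k\<le>n. qbinom q n k * q ^ (n - k) * (U (Suc k) * T (Suc k)))"
    by (simp add: sum.distrib)
  also have "\<dots> = (\<Sum>k\<le>Suc n. qbinom q (Suc n) k * (U k * T k))"
    by (rule sum_qbinom_Suc_q_pow_diff[OF q, symmetric])
  finally show ?thesis .
qed

lemma norm_prod_le_geometric:
  fixes f :: "nat \<Rightarrow> 'a::real_normed_field"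
  assumes lim: "f \<longlonglongrightarrow> 1" and \<rho>: "1 < \<rho>"
  obtains C where "0 < C" "\<And>k. norm (\<Prod>j<k. f j) \<le> C * \<rho> ^ k"
proof -
  obtain N where N: "\<And>j. N \<le> j \<Longrightarrow> norm (f j) < \<rho>"
    using order_tendstoD(2)[OF tendsto_norm[OF lim]] \<rho> by (auto simp: eventually_sequentially)
  define D where "D j = max 1 (norm (f j) / \<rho>)" for j
  have D_ge_1: "1 \<le> D j" for j
    by (simp add: D_def)
  have norm_f_le: "norm (f j) \<le> \<rho> * D j" for j
  proof -
    have "norm (f j) / \<rho> \<le> D j"
      by (simp add: D_def)
    then show ?thesis
      using \<rho> by (simp add: field_simps)
  qed
  have D_tail: "D j = 1" if "N \<le> j" for j
    using N[OF that] \<rho> by (simp add: D_def)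
  have "norm (\<Prod>j<k. f j) \<le> (\<Prod>j<N. D j) * \<rho> ^ k" for k
  proof -
    have D_prod: "(\<Prod>j<k. D j) = (\<Prod>j\<in>{..<k} \<inter> {..<N}. D j)"
      by (rule prod.mono_neutral_right) (auto intro: D_tail simp: not_less[symmetric])
    have "norm (\<Prod>j<k. f j) = (\<Prod>j<k. norm (f j))"
      by (simp add: prod_norm)
    also have "\<dots> \<le> (\<Prod>j<k. \<rho> * D j)"
      by (intro prod_mono) (simp add: norm_f_le)
    also have "\<dots> = \<rho> ^ k * (\<Prod>j\<in>{..<k} \<inter> {..<N}. D j)"
      by (simp add: prod.distrib D_prod)
    also have "(\<Prod>j\<in>{..<k} \<inter> {..<N}. D j) \<le> (\<Prod>j<N. D j)"
      using D_ge_1 by (intro prod_mono2) (auto intro: order_trans[OF zero_le_one])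
    finally show ?thesis
      using \<rho> by (simp add: mult.commute mult_left_mono)
  qed
  moreover have "0 < (\<Prod>j<N. D j)"
    using D_ge_1 by (intro prod_pos) (auto intro: less_le_trans[OF zero_less_one])
  ultimately show ?thesis
    using that by blast
qed

lemma qpoch_le_geometric:
  assumes "norm q < 1" and "1 < \<rho>"
  obtains C where "0 < C" "\<And>k. norm (qpoch \<alpha> q k) \<le> C * \<rho> ^ k"
proof -
  have "(\<lambda>j. 1 - \<alpha> * q ^ j) \<longlonglongrightarrow> 1 - \<alpha> * 0"
    by (intro tendsto_intros LIMSEQ_power_zero assms(1))
  then obtain C where "0 < C" "\<And>k. norm (\<Prod>j<k. 1 - \<alpha> * q ^ j) \<le> C * \<rho> ^ k"
    using norm_prod_le_geometric[OF _ assms(2)] by auto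
  then show ?thesis
    using that unfolding qpoch_def by blast
qed

text \<open>No hypothesis on \<open>\<alpha>\<close> is needed because \<open>inverse 0 = 0\<close>; for the same reason the
  summability of the series below needs no hypothesis on \<open>c\<close>.\<close>

lemma norm_inverse_qpoch_le_geometric:
  assumes "norm q < 1" and "1 < \<rho>"
  obtains C where "0 < C" "\<And>k. norm (inverse (qpoch \<alpha> q k)) \<le> C * \<rho> ^ k"
proof -
  have "(\<lambda>j. inverse (1 - \<alpha> * q ^ j)) \<longlonglongrightarrow> inverse (1 - \<alpha> * 0)"
    by (intro tendsto_intros LIMSEQ_power_zero assms(1)) simp
  then obtain C where "0 < C" "\<And>k. norm (\<Prod>j<k. inverse (1 - \<alpha> * q ^ j)) \<le> C * \<rho> ^ k"
    using norm_prod_le_geometric[OF _ assms(2)] by auto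
  moreover have "(\<Prod>j<k. inverse (1 - \<alpha> * q ^ j)) = inverse (qpoch \<alpha> q k)" for k
    using prod_inversef[of "\<lambda>j. 1 - \<alpha> * q ^ j" "{..<k}"] by (simp add: qpoch_def o_def)
  ultimately show ?thesis
    using that by simp
qed

lemma summable_on_product_nonneg:
  fixes f g :: "'a \<Rightarrow> real"
  assumes "f summable_on A" and "g summable_on B"
    and "\<And>x. x \<in> A \<Longrightarrow> 0 \<le> f x" and "\<And>y. y \<in> B \<Longrightarrow> 0 \<le> g y"
  shows "(\<lambda>(x, y). f x * g y) summable_on A \<times> B"
proof (rule summable_on_SigmaI)
  show "((\<lambda>y. case (x, y) of (x, y) \<Rightarrow> f x * g y) has_sum f x * infsum g B) B" for x
    using has_sum_cmult_right[OF has_sum_infsum[OF assms(2)]] by simp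
  show "(\<lambda>x. f x * infsum g B) summable_on A"
    by (rule summable_on_cmult_left[OF assms(1)])
qed (use assms in auto)

lemma summable_on_geometric:
  fixes r :: real
  assumes "0 \<le> r" and "r < 1"
  shows "(\<lambda>n. r ^ n) summable_on UNIV"
  using assms by (simp add: summable_on_UNIV_nonneg_real_iff summable_geometric)

lemma has_sum_shift_fst:
  fixes f :: "nat \<times> 'b \<Rightarrow> 'a::{comm_monoid_add, topological_space}"
  assumes "(f has_sum s) UNIV"
  shows "((\<lambda>(m, n). case m of 0 \<Rightarrow> 0 | Suc m' \<Rightarrow> f (m', n)) has_sum s) UNIV"
proof -
  define g where "g = (\<lambda>(m, n). case m of 0 \<Rightarrow> 0 | Suc m' \<Rightarrow> f (m', n))"
  define h where "h = (\<lambda>(m, n). (Suc m, n :: 'b))"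
  have "inj h" "g \<circ> h = f"
    by (auto simp: inj_def h_def g_def)
  then have "(g has_sum s) (range h)"
    using assms by (simp add: has_sum_reindex)
  moreover have "range h = {p. fst p \<noteq> 0}"
    by (auto simp: h_def image_iff not0_implies_Suc)
  ultimately have "(g has_sum s) {p. fst p \<noteq> 0}"
    by simp
  then show ?thesis
    unfolding g_def[symmetric]
    by (rule has_sum_cong_neutral[THEN iffD1, rotated -1]) (auto simp: g_def)
qed

definition qAppell3_term ::
  "complex \<Rightarrow> complex \<Rightarrow> complex \<Rightarrow> complex \<Rightarrow> complex \<Rightarrow> complex \<Rightarrow> complex \<Rightarrow> complex \<Rightarrow> nat \<times> nat \<Rightarrow> complex"
  where
  "qAppell3_term q a a' b b' c x y = (\<lambda>(m, n).
     qpoch a q m * qpoch a' q n * qpoch b q m * qpoch b' q n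
     / (qpoch q q m * qpoch q q n * qpoch c q (m + n)) * x ^ m * y ^ n)"

lemma qAppell3_eq_infsum: "qAppell3 q a a' b b' c x y = infsum (qAppell3_term q a a' b b' c x y) UNIV"
  by (simp add: qAppell3_def qAppell3_term_def)

lemma norm_qAppell3_term_le_geometric:
  assumes q: "norm q < 1" and \<rho>: "1 < \<rho>"
  obtains K where "\<And>m n. norm (qAppell3_term q a a' b b' c x y (m, n))
    \<le> K * ((\<rho> ^ 4 * norm x) ^ m * (\<rho> ^ 4 * norm y) ^ n)"
proof -
  obtain C1 C2 C3 C4 C5 C6 where C: "0 < C1" "0 < C2" "0 < C3" "0 < C4" "0 < C5" "0 < C6"
    and bounds: "\<And>k. norm (qpoch a q k) \<le> C1 * \<rho> ^ k" "\<And>k. norm (qpoch a' q k) \<le> C2 * \<rho> ^ k"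
      "\<And>k. norm (qpoch b q k) \<le> C3 * \<rho> ^ k" "\<And>k. norm (qpoch b' q k) \<le> C4 * \<rho> ^ k"
      "\<And>k. norm (inverse (qpoch q q k)) \<le> C5 * \<rho> ^ k"
      "\<And>k. norm (inverse (qpoch c q k)) \<le> C6 * \<rho> ^ k"
    by (metis qpoch_le_geometric norm_inverse_qpoch_le_geometric q \<rho>)
  define K where "K = C1 * C2 * C3 * C4 * C5 * C5 * C6"
  have "norm (qAppell3_term q a a' b b' c x y (m, n))
      \<le> K * ((\<rho> ^ 4 * norm x) ^ m * (\<rho> ^ 4 * norm y) ^ n)" for m n
  proof -
    have "norm (qAppell3_term q a a' b b' c x y (m, n))
      = norm (qpoch a q m) * norm (qpoch a' q n) * norm (qpoch b q m) * norm (qpoch b' q n)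
        * norm (inverse (qpoch q q m)) * norm (inverse (qpoch q q n))
        * norm (inverse (qpoch c q (m + n))) * norm x ^ m * norm y ^ n"
      by (simp add: qAppell3_term_def norm_mult norm_divide norm_power norm_inverse divide_inverse)
    also have "\<dots> \<le> (C1 * \<rho> ^ m) * (C2 * \<rho> ^ n) * (C3 * \<rho> ^ m) * (C4 * \<rho> ^ n)
        * (C5 * \<rho> ^ m) * (C5 * \<rho> ^ n) * (C6 * \<rho> ^ (m + n)) * norm x ^ m * norm y ^ n"
      using C \<rho> by (intro mult_mono mult_nonneg_nonneg zero_le_power bounds order_refl) auto
    also have "\<dots> = K * (((\<rho> ^ m) ^ 4 * norm x ^ m) * ((\<rho> ^ n) ^ 4 * norm y ^ n))"
      unfolding K_def power_add power4_eq_xxxx by algebra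
    also have "\<dots> = K * ((\<rho> ^ 4 * norm x) ^ m * (\<rho> ^ 4 * norm y) ^ n)"
      by (simp add: power_mult_distrib mult.commute flip: power_mult)
    finally show ?thesis .
  qed
  then show ?thesis
    by (rule that)
qed

lemma summable_on_qAppell3_term:
  assumes q: "norm q < 1" and x: "norm x < 1" and y: "norm y < 1"
  shows "qAppell3_term q a a' b b' c x y summable_on UNIV"
proof -
  obtain \<rho> :: real where \<rho>: "1 < \<rho>" "\<rho> ^ 4 * norm x < 1" "\<rho> ^ 4 * norm y < 1"
  proof
    define u where "u = (1 + max (norm x) (norm y)) / 2"
    have u: "norm x < u" "norm y < u" "u < 1"
      using x y by (auto simp: u_def)
    then have "0 < u"
      by (meson norm_ge_zero le_less_trans)
    then have "root 4 (1 / u) ^ 4 = 1 / u"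
      by simp
    with u \<open>0 < u\<close> show "1 < root 4 (1 / u)" "root 4 (1 / u) ^ 4 * norm x < 1"
      "root 4 (1 / u) ^ 4 * norm y < 1"
      by (simp_all add: field_simps)
  qed
  define X Y where "X = \<rho> ^ 4 * norm x" and "Y = \<rho> ^ 4 * norm y"
  obtain K where bound: "\<And>m n. norm (qAppell3_term q a a' b b' c x y (m, n)) \<le> K * (X ^ m * Y ^ n)"
    using norm_qAppell3_term_le_geometric[OF q \<rho>(1)] unfolding X_def Y_def by blast
  have "0 \<le> X" "X < 1" "0 \<le> Y" "Y < 1"
    using \<rho> by (simp_all add: X_def Y_def)
  then have "(\<lambda>(m, n). X ^ m * Y ^ n) summable_on UNIV \<times> UNIV"
    by (intro summable_on_product_nonneg summable_on_geometric) auto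
  then have "(\<lambda>p. K * (case p of (m, n) \<Rightarrow> X ^ m * Y ^ n)) summable_on UNIV"
    by (intro summable_on_cmult_right) simp
  then have "(\<lambda>p. norm (qAppell3_term q a a' b b' c x y p)) summable_on UNIV"
    by (rule Infinite_Sum.abs_summable_on_comparison_test')
      (use bound in \<open>auto split: prod.split\<close>)
  then show ?thesis
    by (rule abs_summable_summable)
qed

lemma qAppell3_term_contiguous:
  assumes q: "\<And>j. q ^ Suc j \<noteq> 1" and \<gamma>: "\<And>j. \<gamma> * q ^ j \<noteq> 1"
  shows "qAppell3_term q \<alpha> a' (\<beta> * q) b' \<gamma> x y (Suc m, n)
    = qAppell3_term q \<alpha> a' \<beta> b' \<gamma> x y (Suc m, n)
      + \<beta> * x * (1 - \<alpha>) / (1 - \<gamma>) * qAppell3_term q (\<alpha> * q) a' (\<beta> * q) b' (\<gamma> * q) x y (m, n)"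
proof -
  define s where "s = 1 - q ^ Suc m"
  have "1 - \<gamma> \<noteq> 0" "s \<noteq> 0" "qpoch (\<gamma> * q) q (m + n) \<noteq> 0"
    using \<gamma>[of 0] \<gamma>[of "Suc _"] q[of m] by (auto simp: s_def qpoch_eq_0_iff mult.assoc)
  moreover have "qpoch q q m \<noteq> 0" "qpoch q q n \<noteq> 0"
    by (rule qpoch_q_q_nonzero[OF q])+
  moreover have Q: "qpoch q q (Suc m) = qpoch q q m * s"
    by (simp add: qpoch_Suc s_def)
  moreover have B: "qpoch (\<beta> * q) q (Suc m) = qpoch \<beta> q (Suc m) + \<beta> * s * qpoch (\<beta> * q) q m"
    by (simp add: qpoch_Suc_diff s_def)
  moreover have G: "qpoch \<gamma> q (Suc m + n) = (1 - \<gamma>) * qpoch (\<gamma> * q) q (m + n)"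
    by (simp only: add_Suc qpoch_Suc_shift)
  ultimately show ?thesis
    unfolding qAppell3_term_def prod.case qpoch_Suc_shift[of \<alpha>] power_Suc Q B G
    by (simp add: ring_distribs add_divide_distrib) (simp add: field_simps)
qed

lemma qAppell3_contiguous:
  assumes q: "norm q < 1" and \<gamma>: "\<And>j. \<gamma> * q ^ j \<noteq> 1" and x: "norm x < 1" and y: "norm y < 1"
  shows "qAppell3 q \<alpha> a' (\<beta> * q) b' \<gamma> x y
    = qAppell3 q \<alpha> a' \<beta> b' \<gamma> x y
      + \<beta> * x * (1 - \<alpha>) / (1 - \<gamma>) * qAppell3 q (\<alpha> * q) a' (\<beta> * q) b' (\<gamma> * q) x y"
proof -
  define f where "f = qAppell3_term q \<alpha> a' \<beta> b' \<gamma> x y"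
  define g where "g = qAppell3_term q (\<alpha> * q) a' (\<beta> * q) b' (\<gamma> * q) x y"
  define C where "C = \<beta> * x * (1 - \<alpha>) / (1 - \<gamma>)"
  have "(f has_sum qAppell3 q \<alpha> a' \<beta> b' \<gamma> x y) UNIV"
    unfolding f_def qAppell3_eq_infsum by (intro has_sum_infsum summable_on_qAppell3_term q x y)
  moreover have "(g has_sum qAppell3 q (\<alpha> * q) a' (\<beta> * q) b' (\<gamma> * q) x y) UNIV"
    unfolding g_def qAppell3_eq_infsum by (intro has_sum_infsum summable_on_qAppell3_term q x y)
  ultimately have "((\<lambda>p. f p + C * (case p of (m, n) \<Rightarrow> case m of 0 \<Rightarrow> 0 | Suc m' \<Rightarrow> g (m', n)))
      has_sum (qAppell3 q \<alpha> a' \<beta> b' \<gamma> x y + C * qAppell3 q (\<alpha> * q) a' (\<beta> * q) b' (\<gamma> * q) x y)) UNIV"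
    by (intro has_sum_add has_sum_cmult_right has_sum_shift_fst)
  moreover have "f p + C * (case p of (m, n) \<Rightarrow> case m of 0 \<Rightarrow> 0 | Suc m' \<Rightarrow> g (m', n))
      = qAppell3_term q \<alpha> a' (\<beta> * q) b' \<gamma> x y p" for p
    using qAppell3_term_contiguous[OF power_Suc_neq_1[OF q] \<gamma>]
    by (auto simp: f_def g_def C_def qAppell3_term_def split: prod.split nat.split)
  ultimately show ?thesis
    unfolding C_def qAppell3_eq_infsum[of q \<alpha> a' "\<beta> * q"] by (simp add: infsumI)
qed

lemma qAppell3_contiguous_shifted:
  assumes q: "norm q < 1" and c: "\<And>j. c * q ^ j \<noteq> 1" and x: "norm x < 1" and y: "norm y < 1"
  shows "qAppell3 q (a * q ^ k) a' (b * q) b' (c * q ^ k) x y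
    = qAppell3 q (a * q ^ k) a' b b' (c * q ^ k) x y
      + b * x * (1 - a * q ^ k) / (1 - c * q ^ k) * qAppell3 q (a * q ^ Suc k) a' (b * q) b' (c * q ^ Suc k) x y"
proof -
  have "c * q ^ k * q ^ j \<noteq> 1" for j
    using c[of "k + j"] by (simp add: power_add mult.assoc)
  from qAppell3_contiguous[OF q this x y] show ?thesis
    by (simp add: mult.assoc power_commutes)
qed

lemma qAppell3_expand_b_times_q_power:
  assumes q: "norm q < 1" and c: "\<And>j. c * q ^ j \<noteq> 1" and x: "norm x < 1" and y: "norm y < 1"
  shows "qAppell3 q a a' (b * q ^ n) b' c x y =
    (\<Sum>k\<le>n. qbinom q n k * q ^ (2 * (k choose 2)) * (b * x) ^ k * qpoch a q k / qpoch c q k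
       * qAppell3 q (a * q ^ k) a' (b * q ^ k) b' (c * q ^ k) x y)"
  using c
proof (induction n arbitrary: b)
  case 0
  show ?case
    by (simp add: qbinom_def binomial_eq_0)
next
  case (Suc n)
  define W where "W k = q ^ (2 * (k choose 2)) * (b * x) ^ k * qpoch a q k / qpoch c q k" for k
  define T where "T k = qAppell3 q (a * q ^ k) a' (b * q ^ k) b' (c * q ^ k) x y" for k
  define D where "D k = b * q ^ k * x * (1 - a * q ^ k) / (1 - c * q ^ k)" for k
  have contiguous: "qAppell3 q (a * q ^ k) a' (b * q * q ^ k) b' (c * q ^ k) x y = T k + D k * T (Suc k)" for k
    using qAppell3_contiguous_shifted[OF q Suc.prems x y, where b = "b * q ^ k"]
    by (simp add: T_def D_def mult_ac)
  have weight_Suc: "q ^ k * W k * D k = W (Suc k)" for k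
  proof -
    have "q ^ (2 * (Suc k choose 2)) = q ^ (2 * (k choose 2)) * q ^ k * q ^ k"
      by (simp add: numeral_2_eq_2 power_add algebra_simps)
    then show ?thesis
      by (simp add: W_def D_def qpoch_Suc power_mult_distrib)
  qed
  have "qAppell3 q a a' (b * q ^ Suc n) b' c x y = qAppell3 q a a' ((b * q) * q ^ n) b' c x y"
    by (simp add: mult_ac)
  also have "\<dots> = (\<Sum>k\<le>n. qbinom q n k * (q ^ k * W k) * (T k + D k * T (Suc k)))"
    unfolding Suc.IH[OF Suc.prems] contiguous by (simp add: W_def power_mult_distrib mult_ac)
  also have "\<dots> = (\<Sum>k\<le>Suc n. qbinom q (Suc n) k * (W k * T k))"
    by (rule sum_qbinom_merge_plus[OF power_Suc_neq_1[OF q] weight_Suc])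
  finally show ?case
    by (simp add: W_def T_def mult_ac)
qed

lemma power_int_choose_2_inverse_weight:
  fixes q z :: complex
  assumes "q \<noteq> 0"
  shows "q powi (int (k choose 2) - int n * int k) * (z * inverse q) ^ k
       = q powi (int (k choose 2) - int (Suc n) * int k) * z ^ k"
proof -
  have "int (k choose 2) - int n * int k = (int (k choose 2) - int (Suc n) * int k) + int k"
    by (simp add: algebra_simps)
  then have "q powi (int (k choose 2) - int n * int k) = q powi (int (k choose 2) - int (Suc n) * int k) * q ^ k"
    using assms by (metis power_int_add power_int_of_nat)
  moreover have "q ^ k * (z * inverse q) ^ k = z ^ k"
    using assms by (simp add: field_simps flip: power_mult_distrib)
  ultimately show ?thesis
    by (metis mult.assoc mult.commute)
qed

lemma power_int_choose_2_Suc: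
  fixes q :: complex
  assumes "q \<noteq> 0" and "k \<le> n"
  shows "q ^ (n - k) * q powi (int (Suc k choose 2) - int (Suc n) * int (Suc k))
       = q powi (int (k choose 2) - int (Suc n) * int k) * inverse q"
proof -
  have "int (n - k) + (int (Suc k choose 2) - int (Suc n) * int (Suc k))
      = (int (k choose 2) - int (Suc n) * int k) + (- 1)"
    using assms(2) by (simp add: of_nat_diff numeral_2_eq_2 algebra_simps)
  then show ?thesis
    using assms(1) by (metis power_int_add power_int_minus1_right power_int_of_nat)
qed

lemma qAppell3_expand_b_times_inverse_q_power:
  assumes q0: "q \<noteq> 0" and q: "norm q < 1" and c: "\<And>j. c * q ^ j \<noteq> 1"
    and x: "norm x < 1" and y: "norm y < 1"
  shows "qAppell3 q a a' (b * inverse q ^ n) b' c x y =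
    (\<Sum>k\<le>n. qbinom q n k * q powi (int (k choose 2) - int n * int k) * (- b * x) ^ k
       * qpoch a q k / qpoch c q k * qAppell3 q (a * q ^ k) a' b b' (c * q ^ k) x y)"
  using c
proof (induction n arbitrary: b)
  case 0
  show ?case
    by (simp add: qbinom_def binomial_eq_0)
next
  case (Suc n)
  define U where "U k = q powi (int (k choose 2) - int (Suc n) * int k) * (- b * x) ^ k
    * qpoch a q k / qpoch c q k" for k
  define T where "T k = qAppell3 q (a * q ^ k) a' b b' (c * q ^ k) x y" for k
  define D where "D k = b * inverse q * x * (1 - a * q ^ k) / (1 - c * q ^ k)" for k
  have contiguous: "qAppell3 q (a * q ^ k) a' (b * inverse q) b' (c * q ^ k) x y = T k - D k * T (Suc k)" for k
  proof -
    have "b * inverse q * q = b"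
      using q0 by simp
    from qAppell3_contiguous_shifted[OF q Suc.prems x y, where b = "b * inverse q", unfolded this]
    show ?thesis
      by (simp add: T_def D_def)
  qed
  have weight: "z * q powi (int (k choose 2) - int n * int k) * (- (b * inverse q) * x) ^ k
      = z * (q powi (int (k choose 2) - int (Suc n) * int k) * (- b * x) ^ k)" for z k
    using power_int_choose_2_inverse_weight[OF q0, of k n "- b * x"] by (simp add: mult_ac)
  have weight_Suc: "U k * D k = - (q ^ (n - k) * U (Suc k))" if "k \<le> n" for k
  proof -
    have "q ^ (n - k) * U (Suc k) = (q ^ (n - k) * q powi (int (Suc k choose 2) - int (Suc n) * int (Suc k)))
        * ((- b * x) ^ Suc k * qpoch a q (Suc k) / qpoch c q (Suc k))"
      by (simp only: U_def mult.assoc times_divide_eq_right)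
    also have "\<dots> = - (U k * D k)"
      unfolding power_int_choose_2_Suc[OF q0 that]
      by (simp add: U_def D_def qpoch_Suc divide_inverse mult_ac)
    finally show ?thesis
      by simp
  qed
  have "qAppell3 q a a' (b * inverse q ^ Suc n) b' c x y
      = qAppell3 q a a' ((b * inverse q) * inverse q ^ n) b' c x y"
    by (simp add: mult_ac)
  also have "\<dots> = (\<Sum>k\<le>n. qbinom q n k * U k * (T k - D k * T (Suc k)))"
    unfolding Suc.IH[OF Suc.prems] contiguous weight by (simp add: U_def mult_ac)
  also have "\<dots> = (\<Sum>k\<le>Suc n. qbinom q (Suc n) k * (U k * T k))"
    by (rule sum_qbinom_merge_minus[OF power_Suc_neq_1[OF q] weight_Suc])
  finally show ?case
    by (simp add: U_def T_def mult_ac)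
qed

theorem theorem12:
  fixes q a a' b b' c x y :: complex and n :: nat
  assumes "0 < norm q" and "norm q < 1"
    and "\<forall>j::nat. c * q ^ j \<noteq> 1"
    and "norm x < 1" and "norm y < 1"
  shows "qAppell3 q a a' (b * q ^ n) b' c x y =
           (\<Sum>k\<le>n. qbinom q n k * q ^ (2 * (k choose 2)) * (b * x) ^ k * qpoch a q k / qpoch c q k
              * qAppell3 q (a * q ^ k) a' (b * q ^ k) b' (c * q ^ k) x y)
       \<and> qAppell3 q a a' (b * inverse q ^ n) b' c x y =
           (\<Sum>k\<le>n. qbinom q n k * q powi (int (k choose 2) - int n * int k) * (- b * x) ^ k
              * qpoch a q k / qpoch c q k
              * qAppell3 q (a * q ^ k) a' b b' (c * q ^ k) x y)"
  using qAppell3_expand_b_times_q_power[OF assms(2) assms(3)[rule_format] assms(4,5)]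
    qAppell3_expand_b_times_inverse_q_power[OF _ assms(2) assms(3)[rule_format] assms(4,5)] assms(1)
  by auto

end
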